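(* Let $X_{0-}$ be a real-valued random variable with a bounded density $V_{0-}$, and let $Y^1,Y^2$ be càdlàg stochastic processes on $[0,\infty)$ such that $X_{0-}$ is independent of $(Y^1,Y^2)$. Then for every $t\ge0$, $\left|\mathbb{P}\left(\inf_{0\le s\le t}(X_{0-}+Y^1_s)\le0\right)-\mathbb{P}\left(\inf_{0\le s\le t}(X_{0-}+Y^2_s)\le0\right)\right|\le\|V_{0-}\|_\infty\,\mathbb{E}\left[\sup_{0\le s\le t}|Y^1_s-Y^2_s|\right]$. *)

theory Defs
  imports "HOL-Probability.Probability"
begin

definition cadlag_on_nonneg :: "(real \<Rightarrow> real) \<Rightarrow> bool" where
  "cadlag_on_nonneg f \<longleftrightarrow>
     (\<forall>s\<ge>0. (f \<longlongrightarrow> f s) (at_right s)) \<and>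
     (\<forall>s>0. \<exists>l. (f \<longlongrightarrow> l) (at_left s))"

text \<open>Independence of two random variables with possibly different codomains
  (the library's indep_var requires equal codomain types): the sigma-algebras
  they generate are independent.\<close>
definition indep_rvs :: "'a measure \<Rightarrow> 'b measure \<Rightarrow> ('a \<Rightarrow> 'b) \<Rightarrow> 'c measure \<Rightarrow> ('a \<Rightarrow> 'c) \<Rightarrow> bool" where
  "indep_rvs M Ma X Mb Y \<longleftrightarrow>
     X \<in> measurable M Ma \<and> Y \<in> measurable M Mb \<and>
     prob_space.indep_set M {X -` A \<inter> space M | A. A \<in> sets Ma}
                            {Y -` B \<inter> space M | B. B \<in> sets Mb}"

end

theory Submission
  imports Defs
begin

text \<open>By right-continuity the running infima \<open>I\<^sub>i = inf\<^bsub>[0,t]\<^esub> Y\<^sup>i\<close> are infima over the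
  countable set \<open>{t} \<union> ([0,t] \<inter> \<rat>)\<close>, hence measurable functions of the path pair
  \<open>(Y\<^sup>1, Y\<^sup>2)\<close> and therefore independent of \<open>X\<close>. The events \<open>X + I\<^sub>1 \<le> 0\<close> and
  \<open>X + I\<^sub>2 \<le> 0\<close> differ only when \<open>X\<close> lies between \<open>-I\<^sub>1\<close> and \<open>-I\<^sub>2\<close>. The joint law of
  \<open>X\<close> and \<open>(I\<^sub>1, I\<^sub>2)\<close> is a product, so by Fubini that has probability at most
  \<open>\<parallel>V\<parallel>\<^sub>\<infinity> E|I\<^sub>1 - I\<^sub>2|\<close>, and \<open>|I\<^sub>1 - I\<^sub>2| \<le> sup |Y\<^sup>1 - Y\<^sup>2|\<close> pathwise.\<close>

lemma compact_locally_bounded_imp_bounded: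
  fixes f :: "'a::topological_space \<Rightarrow> 'b::real_normed_vector"
  assumes "compact S"
    and local_bound: "\<And>x. x \<in> S \<Longrightarrow> \<exists>B. eventually (\<lambda>y. y \<in> S \<longrightarrow> norm (f y) \<le> B) (nhds x)"
  shows "bounded (f ` S)"
proof -
  obtain B U where U: "\<And>x. x \<in> S \<Longrightarrow> open (U x) \<and> x \<in> U x \<and> (\<forall>y\<in>U x. y \<in> S \<longrightarrow> norm (f y) \<le> B x)"
    using local_bound unfolding eventually_nhds by metis
  obtain C where C: "C \<subseteq> S" "finite C" "S \<subseteq> (\<Union>c\<in>C. U c)"
    using compactE_image[OF \<open>compact S\<close>, of S U] U by blast
  have "norm (f y) \<le> (\<Sum>c\<in>C. \<bar>B c\<bar>)" if "y \<in> S" for y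
  proof -
    obtain c where c: "c \<in> C" "y \<in> U c" using C(3) \<open>y \<in> S\<close> by blast
    have "norm (f y) \<le> \<bar>B c\<bar>" using U[of c] c C(1) \<open>y \<in> S\<close> by force
    also have "\<dots> \<le> (\<Sum>c\<in>C. \<bar>B c\<bar>)" using c C(2) by (intro member_le_sum) auto
    finally show ?thesis .
  qed
  then show ?thesis unfolding bounded_iff by blast
qed

lemma cadlag_on_nonneg_locally_bounded:
  fixes f :: "real \<Rightarrow> real"
  assumes "cadlag_on_nonneg f" and "s \<ge> 0"
  shows "\<exists>B. eventually (\<lambda>y. 0 \<le> y \<longrightarrow> \<bar>f y\<bar> \<le> B) (nhds s)"
proof -
  have "((\<lambda>y. \<bar>f y\<bar>) \<longlongrightarrow> \<bar>f s\<bar>) (at_right s)"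
    using assms unfolding cadlag_on_nonneg_def by (blast intro: tendsto_rabs)
  then have right: "eventually (\<lambda>y. \<bar>f y\<bar> < \<bar>f s\<bar> + 1) (at_right s)"
    by (rule order_tendstoD(2)) simp
  obtain L where left: "eventually (\<lambda>y. 0 \<le> y \<longrightarrow> \<bar>f y\<bar> \<le> L) (at_left s)"
  proof (cases "s = 0")
    case True
    have "eventually (\<lambda>y. y \<in> {-1<..<s}) (at_left s)"
      using True by (intro eventually_at_left_real) simp
    then show ?thesis using True by (intro that[of 0]) (auto elim: eventually_mono)
  next
    case False
    with assms obtain l where "(f \<longlongrightarrow> l) (at_left s)"
      unfolding cadlag_on_nonneg_def by force
    then have "((\<lambda>y. \<bar>f y\<bar>) \<longlongrightarrow> \<bar>l\<bar>) (at_left s)" by (rule tendsto_rabs)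
    then have "eventually (\<lambda>y. \<bar>f y\<bar> < \<bar>l\<bar> + 1) (at_left s)"
      by (rule order_tendstoD(2)) simp
    then show ?thesis by (intro that[of "\<bar>l\<bar> + 1"]) (auto elim: eventually_mono)
  qed
  let ?B = "max (\<bar>f s\<bar> + 1) L"
  have "eventually (\<lambda>y. 0 \<le> y \<longrightarrow> \<bar>f y\<bar> \<le> ?B) (at s)"
    unfolding eventually_at_split using left right by (auto elim: eventually_mono)
  then show ?thesis unfolding eventually_nhds_conv_at by auto
qed

lemma cadlag_on_nonneg_bounded:
  assumes "cadlag_on_nonneg f"
  shows "bounded (f ` {0..t})"
proof (rule compact_locally_bounded_imp_bounded)
  fix s assume "s \<in> {0..t}"
  then obtain B where "eventually (\<lambda>y. 0 \<le> y \<longrightarrow> \<bar>f y\<bar> \<le> B) (nhds s)"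
    using cadlag_on_nonneg_locally_bounded[OF assms] by auto
  then show "\<exists>B. eventually (\<lambda>y. y \<in> {0..t} \<longrightarrow> norm (f y) \<le> B) (nhds s)"
    by (auto elim: eventually_mono)
qed simp

lemma right_continuous_INF_eq_INF_rats:
  fixes f :: "real \<Rightarrow> real"
  assumes right_cont: "\<And>s. 0 \<le> s \<Longrightarrow> s < t \<Longrightarrow> (f \<longlongrightarrow> f s) (at_right s)"
    and bdd: "bdd_below (f ` {0..t})" and "0 \<le> t"
  shows "(INF s\<in>{0..t}. f s) = (INF s\<in>insert t ({0..t} \<inter> \<rat>). f s)"
proof (rule antisym)
  let ?D = "insert t ({0..t} \<inter> \<rat>)"
  have "?D \<subseteq> {0..t}" using \<open>0 \<le> t\<close> by auto
  then show "(INF s\<in>{0..t}. f s) \<le> (INF s\<in>?D. f s)"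
    using bdd by (intro cINF_superset_mono) auto
  have bdd_D: "bdd_below (f ` ?D)"
    using bdd \<open>?D \<subseteq> {0..t}\<close> by (meson bdd_below_mono image_mono)
  have lower: "(INF s\<in>?D. f s) \<le> f q" if "q \<in> ?D" for q
    using bdd_D that by (rule cINF_lower)
  show "(INF s\<in>?D. f s) \<le> (INF s\<in>{0..t}. f s)"
  proof (rule cINF_greatest)
    fix s assume s: "s \<in> {0..t}"
    show "(INF s\<in>?D. f s) \<le> f s"
    proof (cases "s = t")
      case True
      then show ?thesis using lower[of t] by simp
    next
      case False
      with s have "s < t" by simp
      let ?F = "at s within ({s<..<t} \<inter> \<rat>)"
      have "s islimpt ({s<..<t} \<inter> \<rat>)"
        unfolding islimpt_approachable_real
      proof (intro allI impI)
        fix e :: real assume "e > 0"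
        with \<open>s < t\<close> obtain q where "q \<in> \<rat>" "s < q" "q < min t (s + e)"
          using Rats_dense_in_real[of s "min t (s + e)"] by auto
        then show "\<exists>q\<in>{s<..<t} \<inter> \<rat>. q \<noteq> s \<and> \<bar>q - s\<bar> < e"
          by (intro bexI[of _ q]) auto
      qed
      then have "?F \<noteq> bot" by (simp add: trivial_limit_within)
      moreover have "(f \<longlongrightarrow> f s) ?F"
        using right_cont[of s] s \<open>s < t\<close> by (auto intro: tendsto_within_subset)
      moreover have "eventually (\<lambda>q. (INF s\<in>?D. f s) \<le> f q) ?F"
        unfolding eventually_at_filter
        by (intro always_eventually) (use s lower in auto)
      ultimately show ?thesis by (intro tendsto_lowerbound)
    qed
  qed (use \<open>0 \<le> t\<close> in auto)
qed

lemma cINF_diff_abs_le: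
  fixes f g :: "'b \<Rightarrow> real"
  assumes "A \<noteq> {}" "bdd_below (f ` A)" "bdd_below (g ` A)"
    and "\<And>s. s \<in> A \<Longrightarrow> \<bar>f s - g s\<bar> \<le> d"
  shows "\<bar>(INF s\<in>A. f s) - (INF s\<in>A. g s)\<bar> \<le> d"
proof -
  have "(INF s\<in>A. f s) \<le> d + (INF s\<in>A. g s)"
    if "bdd_below (f ` A)" "bdd_below (g ` A)" "\<And>s. s \<in> A \<Longrightarrow> f s \<le> d + g s"
    for f g :: "'b \<Rightarrow> real"
  proof -
    have "(INF s\<in>A. f s) \<le> (INF s\<in>A. d + g s)"
      using assms(1) that by (intro cINF_mono) (auto intro: cINF_lower)
    also have "\<dots> = d + (INF s\<in>A. g s)" using assms(1) that by (simp add: Inf_add_eq)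
    finally show ?thesis .
  qed
  from this[of f g] this[of g f] assms show ?thesis by (force simp: abs_le_iff)
qed

lemma cINF_diff_abs_le_SUP:
  fixes f g :: "'b \<Rightarrow> real"
  assumes "A \<noteq> {}" "bdd_below (f ` A)" "bdd_below (g ` A)"
  shows "ennreal \<bar>(INF s\<in>A. f s) - (INF s\<in>A. g s)\<bar> \<le> (SUP s\<in>A. ennreal \<bar>f s - g s\<bar>)"
proof (cases "(SUP s\<in>A. ennreal \<bar>f s - g s\<bar>) = \<top>")
  case True
  then show ?thesis by (simp only: top_greatest)
next
  case False
  then obtain d where d: "(SUP s\<in>A. ennreal \<bar>f s - g s\<bar>) = ennreal d" "0 \<le> d"
    using ennreal_cases by metis
  have "\<bar>f s - g s\<bar> \<le> d" if "s \<in> A" for s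
    using SUP_upper[OF that, of "\<lambda>s. ennreal \<bar>f s - g s\<bar>"] d by simp
  then show ?thesis
    unfolding d(1) using assms by (intro ennreal_leI cINF_diff_abs_le)
qed

lemma cadlag_on_nonneg_INF_eq_INF_rats:
  assumes "cadlag_on_nonneg f" and "0 \<le> t"
  shows "(INF s\<in>{0..t}. f s) = (INF s\<in>insert t ({0..t} \<inter> \<rat>). f s)"
  using assms cadlag_on_nonneg_bounded[OF assms(1), of t]
  by (intro right_continuous_INF_eq_INF_rats bounded_imp_bdd_below) (auto simp: cadlag_on_nonneg_def)

lemma (in prob_space) indep_rvs_compose_right:
  assumes indep: "indep_rvs M Ma X Mb Z" and g: "g \<in> measurable Mb Mc"
    and Y: "\<And>\<omega>. \<omega> \<in> space M \<Longrightarrow> Y \<omega> = g (Z \<omega>)"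
  shows "indep_rvs M Ma X Mc Y"
proof -
  have Z: "Z \<in> measurable M Mb"
    and ind: "indep_set {X -` A \<inter> space M | A. A \<in> sets Ma} {Z -` B \<inter> space M | B. B \<in> sets Mb}"
    using indep unfolding indep_rvs_def by auto
  have "Y \<in> measurable M Mc"
    using measurable_comp[OF Z g] by (rule measurable_cong[THEN iffD2, rotated]) (simp add: Y)
  moreover have "{Y -` C \<inter> space M | C. C \<in> sets Mc} \<subseteq> {Z -` B \<inter> space M | B. B \<in> sets Mb}"
  proof safe
    fix C assume "C \<in> sets Mc"
    then have "g -` C \<inter> space Mb \<in> sets Mb" using g by (rule measurable_sets[rotated])
    moreover have "Y -` C \<inter> space M = Z -` (g -` C \<inter> space Mb) \<inter> space M"
      using Y measurable_space[OF Z] by auto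
    ultimately show "\<exists>B. Y -` C \<inter> space M = Z -` B \<inter> space M \<and> B \<in> sets Mb" by blast
  qed
  then have "indep_set {X -` A \<inter> space M | A. A \<in> sets Ma} {Y -` C \<inter> space M | C. C \<in> sets Mc}"
    using ind indep_setD_ev1[OF ind] indep_setD_ev2[OF ind]
    by (intro indep_setI) (auto intro!: indep_setD)
  ultimately show ?thesis using indep unfolding indep_rvs_def by auto
qed

lemma (in prob_space) indep_rvs_distr_Pair:
  assumes indep: "indep_rvs M Ma X Mb Y"
  shows "distr M (Ma \<Otimes>\<^sub>M Mb) (\<lambda>\<omega>. (X \<omega>, Y \<omega>)) = distr M Ma X \<Otimes>\<^sub>M distr M Mb Y"
proof -
  have X: "X \<in> measurable M Ma" and Y: "Y \<in> measurable M Mb"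
    and ind: "indep_set {X -` A \<inter> space M | A. A \<in> sets Ma} {Y -` B \<inter> space M | B. B \<in> sets Mb}"
    using indep unfolding indep_rvs_def by auto
  interpret X: prob_space "distr M Ma X" using X by (rule prob_space_distr)
  interpret Y: prob_space "distr M Mb Y" using Y by (rule prob_space_distr)
  show ?thesis
  proof (rule pair_measure_eqI[symmetric])
    fix A B assume A: "A \<in> sets (distr M Ma X)" and B: "B \<in> sets (distr M Mb Y)"
    have "(\<lambda>\<omega>. (X \<omega>, Y \<omega>)) -` (A \<times> B) \<inter> space M = (X -` A \<inter> space M) \<inter> (Y -` B \<inter> space M)"
      by auto
    moreover have "prob ((X -` A \<inter> space M) \<inter> (Y -` B \<inter> space M))
        = prob (X -` A \<inter> space M) * prob (Y -` B \<inter> space M)"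
      using A B by (intro indep_setD[OF ind]) auto
    ultimately show "emeasure (distr M Ma X) A * emeasure (distr M Mb Y) B
        = emeasure (distr M (Ma \<Otimes>\<^sub>M Mb) (\<lambda>\<omega>. (X \<omega>, Y \<omega>))) (A \<times> B)"
      using A B X Y by (simp add: emeasure_distr emeasure_eq_measure ennreal_mult)
  qed (auto intro: X.sigma_finite_measure Y.sigma_finite_measure)
qed

lemma emeasure_density_le_bound:
  assumes "V \<in> borel_measurable N" and "AE x in N. V x \<le> c" and "S \<in> sets N"
  shows "emeasure (density N V) S \<le> c * emeasure N S"
proof -
  have "emeasure (density N V) S = (\<integral>\<^sup>+x. V x * indicator S x \<partial>N)"
    using assms by (simp add: emeasure_density)
  also have "\<dots> \<le> (\<integral>\<^sup>+x. c * indicator S x \<partial>N)"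
    using assms(2) by (intro nn_integral_mono_AE) (auto elim!: eventually_mono intro: mult_right_mono)
  also have "\<dots> = c * emeasure N S"
    using assms(3) by (rule nn_integral_cmult_indicator)
  finally show ?thesis .
qed

lemma emeasure_lborel_threshold_disagreement:
  fixes a b :: real
  shows "emeasure lborel {x. (x + a \<le> 0) \<noteq> (x + b \<le> 0)} = ennreal \<bar>a - b\<bar>"
proof -
  have "{x. (x + a \<le> 0) \<noteq> (x + b \<le> 0)} = {min (- a) (- b)<..max (- a) (- b)}" by auto
  then show ?thesis by (simp add: max_def min_def abs_if)
qed

lemma (in finite_measure) finite_measure_abs_diff_le_sym_diff:
  assumes "A \<in> sets M" "B \<in> sets M"
  shows "\<bar>measure M A - measure M B\<bar> \<le> measure M (sym_diff A B)"
proof -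
  have "measure M (sym_diff A B) = measure M (A - B) + measure M (B - A)"
    using assms by (intro finite_measure_Union) auto
  moreover have "measure M A - measure M B = measure M (A - B) - measure M (B - A)"
    using assms by (simp add: finite_measure_Diff' Int_commute)
  ultimately show ?thesis
    using measure_nonneg[of M "A - B"] measure_nonneg[of M "B - A"] by linarith
qed

lemma (in prob_space) indep_rvs_path_infima:
  fixes Y1 Y2 :: "real \<Rightarrow> 'a \<Rightarrow> real"
  assumes indep: "indep_rvs M Ma X (PiM {0..} (\<lambda>_. borel \<Otimes>\<^sub>M borel)) (\<lambda>\<omega>. \<lambda>s\<in>{0..}. (Y1 s \<omega>, Y2 s \<omega>))"
    and cadlag1: "\<And>\<omega>. \<omega> \<in> space M \<Longrightarrow> cadlag_on_nonneg (\<lambda>s. Y1 s \<omega>)"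
    and cadlag2: "\<And>\<omega>. \<omega> \<in> space M \<Longrightarrow> cadlag_on_nonneg (\<lambda>s. Y2 s \<omega>)"
    and "0 \<le> t"
  shows "indep_rvs M Ma X (borel \<Otimes>\<^sub>M borel) (\<lambda>\<omega>. (INF s\<in>{0..t}. Y1 s \<omega>, INF s\<in>{0..t}. Y2 s \<omega>))"
proof (rule indep_rvs_compose_right[OF indep])
  let ?D = "insert t ({0..t} \<inter> \<rat>)"
  let ?g = "\<lambda>p :: real \<Rightarrow> real \<times> real. (INF q\<in>?D. fst (p q), INF q\<in>?D. snd (p q))"
  have "?D \<subseteq> {0..}" using \<open>0 \<le> t\<close> by auto
  have "(\<lambda>p. p q) \<in> measurable (PiM {0..} (\<lambda>_. borel \<Otimes>\<^sub>M borel)) (borel \<Otimes>\<^sub>M borel)" if "q \<in> ?D" for q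
    using that \<open>?D \<subseteq> {0..}\<close> by (intro measurable_component_singleton) auto
  then show "?g \<in> measurable (PiM {0..} (\<lambda>_. borel \<Otimes>\<^sub>M borel)) (borel \<Otimes>\<^sub>M borel)"
    by (intro measurable_Pair borel_measurable_cINF_real countable_insert countable_Int2 countable_rat
          measurable_compose[OF _ measurable_fst] measurable_compose[OF _ measurable_snd])
  fix \<omega> assume "\<omega> \<in> space M"
  then show "(INF s\<in>{0..t}. Y1 s \<omega>, INF s\<in>{0..t}. Y2 s \<omega>) = ?g (\<lambda>s\<in>{0..}. (Y1 s \<omega>, Y2 s \<omega>))"
    using \<open>?D \<subseteq> {0..}\<close> cadlag1 cadlag2 \<open>0 \<le> t\<close>
    by (auto simp: cadlag_on_nonneg_INF_eq_INF_rats intro!: INF_cong)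
qed

lemma (in prob_space) emeasure_threshold_disagreement_le:
  fixes X :: "'a \<Rightarrow> real" and W :: "'a \<Rightarrow> real \<times> real"
  assumes density: "distributed M lborel X V"
    and bound: "AE x in lborel. V x \<le> c"
    and indep: "indep_rvs M borel X (borel \<Otimes>\<^sub>M borel) W"
  shows "emeasure M {\<omega>\<in>space M. (X \<omega> + fst (W \<omega>) \<le> 0) \<noteq> (X \<omega> + snd (W \<omega>) \<le> 0)}
      \<le> c * (\<integral>\<^sup>+\<omega>. ennreal \<bar>fst (W \<omega>) - snd (W \<omega>)\<bar> \<partial>M)"
proof -
  have [measurable]: "X \<in> borel_measurable M" "W \<in> measurable M (borel \<Otimes>\<^sub>M borel)"
    using indep unfolding indep_rvs_def by auto
  let ?\<mu> = "distr M borel X" and ?\<nu> = "distr M (borel \<Otimes>\<^sub>M borel) W"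
  interpret \<mu>\<nu>: pair_prob_space ?\<mu> ?\<nu>
    by (simp add: pair_prob_space_def pair_sigma_finite_def prob_space_distr prob_space_imp_sigma_finite)
  define S :: "(real \<times> real \<times> real) set"
    where "S = {z. (fst z + fst (snd z) \<le> 0) \<noteq> (fst z + snd (snd z) \<le> 0)}"
  have "{z \<in> space (borel \<Otimes>\<^sub>M (borel \<Otimes>\<^sub>M borel)).
          (fst z + fst (snd z) \<le> (0::real)) \<noteq> (fst z + snd (snd z) \<le> 0)}
      \<in> sets (borel \<Otimes>\<^sub>M (borel \<Otimes>\<^sub>M borel))"
    by measurable
  then have S[measurable]: "S \<in> sets (borel \<Otimes>\<^sub>M (borel \<Otimes>\<^sub>M borel))"
    by (simp add: S_def space_pair_measure)
  have slice: "emeasure ?\<mu> ((\<lambda>x. (x, w)) -` S) \<le> c * ennreal \<bar>fst w - snd w\<bar>" for w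
  proof -
    let ?I = "{x. (x + fst w \<le> 0) \<noteq> (x + snd w \<le> 0)}"
    have [measurable]: "?I \<in> sets borel" by measurable
    have "emeasure ?\<mu> ?I = emeasure (distr M lborel X) ?I"
      by (simp add: emeasure_distr)
    also have "\<dots> = emeasure (density lborel V) ?I"
      using density unfolding distributed_def by simp
    also have "\<dots> \<le> c * emeasure lborel ?I"
      using density bound unfolding distributed_def by (intro emeasure_density_le_bound) auto
    also have "\<dots> = c * ennreal \<bar>fst w - snd w\<bar>"
      by (simp only: emeasure_lborel_threshold_disagreement)
    finally show ?thesis by (simp add: S_def)
  qed
  have "emeasure M {\<omega>\<in>space M. (X \<omega> + fst (W \<omega>) \<le> 0) \<noteq> (X \<omega> + snd (W \<omega>) \<le> 0)}
      = emeasure (distr M (borel \<Otimes>\<^sub>M (borel \<Otimes>\<^sub>M borel)) (\<lambda>\<omega>. (X \<omega>, W \<omega>))) S"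
  proof -
    have "(\<lambda>\<omega>. (X \<omega>, W \<omega>)) -` S \<inter> space M
        = {\<omega>\<in>space M. (X \<omega> + fst (W \<omega>) \<le> 0) \<noteq> (X \<omega> + snd (W \<omega>) \<le> 0)}"
      by (auto simp: S_def)
    then show ?thesis by (simp add: emeasure_distr)
  qed
  also have "\<dots> = emeasure (?\<mu> \<Otimes>\<^sub>M ?\<nu>) S"
    using indep_rvs_distr_Pair[OF indep] by simp
  also have "\<dots> = (\<integral>\<^sup>+w. emeasure ?\<mu> ((\<lambda>x. (x, w)) -` S) \<partial>?\<nu>)"
    by (rule \<mu>\<nu>.emeasure_pair_measure_alt2) simp
  also have "\<dots> \<le> (\<integral>\<^sup>+w. c * ennreal \<bar>fst w - snd w\<bar> \<partial>?\<nu>)"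
    by (intro nn_integral_mono slice)
  also have "\<dots> = (\<integral>\<^sup>+\<omega>. c * ennreal \<bar>fst (W \<omega>) - snd (W \<omega>)\<bar> \<partial>M)"
    by (simp add: nn_integral_distr)
  also have "\<dots> = c * (\<integral>\<^sup>+\<omega>. ennreal \<bar>fst (W \<omega>) - snd (W \<omega>)\<bar> \<partial>M)"
    by (simp add: nn_integral_cmult)
  finally show ?thesis .
qed

theorem lemma3p10:
  fixes M :: "'a measure"
    and X :: "'a \<Rightarrow> real"
    and V :: "real \<Rightarrow> ennreal"
    and Y1 Y2 :: "real \<Rightarrow> 'a \<Rightarrow> real"
    and C t :: real
  assumes "prob_space M"
    and density: "distributed M lborel X V"
    and bound: "AE x in lborel. V x \<le> ennreal C"
    and "C \<ge> 0"
    and rv1: "\<And>s. Y1 s \<in> borel_measurable M"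
    and rv2: "\<And>s. Y2 s \<in> borel_measurable M"
    and cadlag1: "\<And>\<omega>. \<omega> \<in> space M \<Longrightarrow> cadlag_on_nonneg (\<lambda>s. Y1 s \<omega>)"
    and cadlag2: "\<And>\<omega>. \<omega> \<in> space M \<Longrightarrow> cadlag_on_nonneg (\<lambda>s. Y2 s \<omega>)"
    and indep: "indep_rvs M borel X
                  (PiM {0..} (\<lambda>_. borel \<Otimes>\<^sub>M borel))
                  (\<lambda>\<omega>. \<lambda>s\<in>{0..}. (Y1 s \<omega>, Y2 s \<omega>))"
    and "t \<ge> 0"
  shows "ennreal \<bar>measure M {\<omega>\<in>space M. (INF s\<in>{0..t}. X \<omega> + Y1 s \<omega>) \<le> 0}
                 - measure M {\<omega>\<in>space M. (INF s\<in>{0..t}. X \<omega> + Y2 s \<omega>) \<le> 0}\<bar>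
         \<le> ennreal C * (\<integral>\<^sup>+ \<omega>. (SUP s\<in>{0..t}. ennreal \<bar>Y1 s \<omega> - Y2 s \<omega>\<bar>) \<partial>M)"
proof -
  interpret prob_space M by fact
  define W where "W \<omega> = (INF s\<in>{0..t}. Y1 s \<omega>, INF s\<in>{0..t}. Y2 s \<omega>)" for \<omega>
  have indep_W: "indep_rvs M borel X (borel \<Otimes>\<^sub>M borel) W"
    unfolding W_def using indep cadlag1 cadlag2 \<open>t \<ge> 0\<close> by (rule indep_rvs_path_infima)
  then have [measurable]: "X \<in> borel_measurable M" "W \<in> measurable M (borel \<Otimes>\<^sub>M borel)"
    unfolding indep_rvs_def by auto
  have bdd: "bdd_below ((\<lambda>s. Y1 s \<omega>) ` {0..t})" "bdd_below ((\<lambda>s. Y2 s \<omega>) ` {0..t})"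
    if "\<omega> \<in> space M" for \<omega>
    using cadlag1[OF that] cadlag2[OF that] by (auto intro: bounded_imp_bdd_below cadlag_on_nonneg_bounded)
  define E1 where "E1 = {\<omega>\<in>space M. X \<omega> + fst (W \<omega>) \<le> 0}"
  define E2 where "E2 = {\<omega>\<in>space M. X \<omega> + snd (W \<omega>) \<le> 0}"
  have hit: "{\<omega>\<in>space M. (INF s\<in>{0..t}. X \<omega> + Y1 s \<omega>) \<le> 0} = E1"
            "{\<omega>\<in>space M. (INF s\<in>{0..t}. X \<omega> + Y2 s \<omega>) \<le> 0} = E2"
    using bdd \<open>t \<ge> 0\<close> by (auto simp: E1_def E2_def W_def Inf_add_eq)
  have "ennreal \<bar>measure M E1 - measure M E2\<bar> \<le> emeasure M (sym_diff E1 E2)"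
    unfolding E1_def E2_def
    by (simp add: emeasure_eq_measure ennreal_leI finite_measure_abs_diff_le_sym_diff)
  also have "sym_diff E1 E2 = {\<omega>\<in>space M. (X \<omega> + fst (W \<omega>) \<le> 0) \<noteq> (X \<omega> + snd (W \<omega>) \<le> 0)}"
    by (auto simp: E1_def E2_def)
  also have "emeasure M \<dots> \<le> ennreal C * (\<integral>\<^sup>+\<omega>. ennreal \<bar>fst (W \<omega>) - snd (W \<omega>)\<bar> \<partial>M)"
    using density bound indep_W by (rule emeasure_threshold_disagreement_le)
  also have "\<dots> \<le> ennreal C * (\<integral>\<^sup>+ \<omega>. (SUP s\<in>{0..t}. ennreal \<bar>Y1 s \<omega> - Y2 s \<omega>\<bar>) \<partial>M)"
    using bdd \<open>t \<ge> 0\<close>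
    by (intro mult_left_mono nn_integral_mono) (auto simp: W_def intro: cINF_diff_abs_le_SUP)
  finally show ?thesis unfolding hit .
qed

end
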